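(* Let $R$ be a real $n\times n$ expansive matrix, $S=R^t$, $B\subset\mathbb{R}^n$ finite with $0\in B$ and $N=\#B$, $\tau_b(x)=R^{-1}(x+b)$, and let $\mu=\mu_B$ be the invariant measure of $(\tau_b)_{b\in B}$ with equal probabilities. Suppose $\mu$ has a spectrum $\Lambda$ for which there exist $a_1,\dots,a_p\in\mathbb{R}^n$ and sets $\Lambda_1,\dots,\Lambda_p\subset\operatorname{Per}(\hat\delta_B)$ such that $\Lambda=\bigcup_{i=1}^p(a_i+S\Lambda_i)$ as a disjoint union, and each $\Lambda_i$ is a spectrum for $\mu$. Then $p=N$ and $\{S^{-1}a_1,\dots,S^{-1}a_p\}$ is a spectrum for $\delta_B$, i.e. $(\delta_B,\{S^{-1}a_1,\dots,S^{-1}a_p\})$ is a spectral pair. *)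

theory Defs
  imports "HOL-Probability.Probability"
begin

definition expo :: "real^'n \<Rightarrow> real^'n \<Rightarrow> complex" where
  "expo l x = cis (2 * pi * (l \<bullet> x))"

definition expansive :: "real^'n^'n \<Rightarrow> bool" where
  "expansive R \<longleftrightarrow>
     (\<forall>z::complex. det (mat z - (\<chi> i j. complex_of_real (R $ i $ j))) = 0 \<longrightarrow> cmod z > 1)"

definition tau :: "real^'n^'n \<Rightarrow> real^'n \<Rightarrow> real^'n \<Rightarrow> real^'n" where
  "tau R b x = matrix_inv R *v (x + b)"

definition ifs_invariant :: "real^'n^'n \<Rightarrow> (real^'n) set \<Rightarrow> (real^'n) measure \<Rightarrow> bool" where
  "ifs_invariant R B \<mu> \<longleftrightarrow>
     sets \<mu> = sets borel \<and> prob_space \<mu> \<and>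
     (\<forall>A \<in> sets borel. emeasure \<mu> A =
        (\<Sum>b\<in>B. emeasure \<mu> (tau R b -` A)) / of_nat (card B))"

definition deltaB :: "(real^'n) set \<Rightarrow> (real^'n) measure" where
  "deltaB B = distr (measure_pmf (pmf_of_set B)) borel (\<lambda>x. x)"

definition deltaB_hat :: "(real^'n) set \<Rightarrow> real^'n \<Rightarrow> complex" where
  "deltaB_hat B x = (\<Sum>b\<in>B. expo b x) / of_nat (card B)"

definition Per :: "('a::plus \<Rightarrow> 'b) \<Rightarrow> 'a set" where
  "Per f = {t. \<forall>x. f (x + t) = f x}"

text \<open>Lambda is a spectrum for M: {e_l : l in Lambda} is an orthonormal basis of L^2(M),
  i.e. orthonormal and complete (only the zero element is orthogonal to all e_l).\<close>
definition is_spectrum :: "(real^'n) measure \<Rightarrow> (real^'n) set \<Rightarrow> bool" where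
  "is_spectrum M \<Lambda> \<longleftrightarrow>
     (\<forall>l\<in>\<Lambda>. \<forall>l'\<in>\<Lambda>. (LINT x|M. expo l x * cnj (expo l' x)) = (if l = l' then 1 else 0)) \<and>
     (\<forall>f \<in> borel_measurable M. integrable M (\<lambda>x. (cmod (f x))\<^sup>2) \<longrightarrow>
        (\<forall>l\<in>\<Lambda>. (LINT x|M. f x * cnj (expo l x)) = 0) \<longrightarrow> (AE x in M. f x = 0))"

end

theory Submission
  imports Defs
begin

(* Write S = transpose R, c_i = S^-1 a_i and mu_hat v = integral of expo v over mu. Invariance
   of mu gives mu_hat (S v) = deltaB_hat B v * mu_hat v.

   Orthogonality: if deltaB_hat B (c_i - c_j) were nonzero for some i \<noteq> j, orthogonality of
   Lambda would force mu_hat (c_i - c_j + l - l') = 0 for every l in Lambda_i and a fixed l' in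
   Lambda_j (the periods l, l' of deltaB_hat B drop out), contradicting completeness of Lambda_i.

   Completeness: since mu (tau_b^-1 A) \<le> N mu A, the Radon-Nikodym theorem provides bounded
   densities for the functionals f \<mapsto> integral of f (tau_b x) * k x. For g on B orthogonal to
   all expo c_i these combine to a bounded function orthogonal to every expo l, l in Lambda,
   hence zero; testing it against exponentials shows that the character sum of cnj g vanishes
   everywhere, so g = 0 by linear independence of characters.

   An orthonormal and complete family of exponentials in L^2(delta_B) = C^B has exactly
   N = card B members. *)

section \<open>Expansive matrices\<close>

lemma det_uminus: "det (- A) = (-1) ^ CARD('n) * det (A :: 'a::comm_ring_1^'n^'n)"
proof -
  have "(\<Prod>i\<in>UNIV. (- A) $ i $ p i) = (-1) ^ CARD('n) * (\<Prod>i\<in>UNIV. A $ i $ p i)" for p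
    by (simp add: prod.distrib[symmetric] prod_constant[symmetric] del: prod_constant)
  then show ?thesis by (simp add: det_def sum_distrib_left algebra_simps)
qed

lemma expansive_imp_invertible:
  fixes R :: "real^'n^'n"
  assumes "expansive R" shows "invertible R"
proof -
  have "det (\<chi> i j. complex_of_real (R $ i $ j)) = of_real (det R)"
    by (simp add: det_def of_real_sum of_real_prod)
  then have "det (mat 0 - (\<chi> i j. complex_of_real (R $ i $ j))) = (-1) ^ CARD('n) * of_real (det R)"
    by (simp add: det_uminus)
  then have "det R \<noteq> 0"
    using assms unfolding expansive_def by (metis mult_eq_0_iff norm_zero of_real_0 not_one_less_zero)
  then show ?thesis by (simp add: invertible_det_nz)
qed

lemma matrix_inv_inverse:
  assumes "invertible A"
  shows "A ** matrix_inv A = mat 1" and "matrix_inv A ** A = mat 1"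
  using someI_ex[OF assms[unfolded invertible_def]] by (simp_all add: matrix_inv_def)

lemma matrix_inv_transpose:
  fixes A :: "'a::comm_semiring_1^'n^'m"
  assumes "invertible A"
  shows "matrix_inv (transpose A) = transpose (matrix_inv A)"
proof -
  have inv: "transpose A ** transpose (matrix_inv A) = mat 1"
    "transpose (matrix_inv A) ** transpose A = mat 1"
    using matrix_inv_inverse[OF assms] by (metis matrix_transpose_mul transpose_mat)+
  then have "invertible (transpose A)" unfolding invertible_def by blast
  then have "matrix_inv (transpose A) = matrix_inv (transpose A) ** (transpose A ** transpose (matrix_inv A))"
    using inv by (simp add: matrix_mul_rid)
  also have "\<dots> = transpose (matrix_inv A)"
    using matrix_inv_inverse(2)[OF \<open>invertible (transpose A)\<close>] by (simp add: matrix_mul_assoc matrix_mul_lid)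
  finally show ?thesis .
qed

lemma matrix_inv_mult_vector:
  assumes "invertible A"
  shows "matrix_inv A *v (A *v v) = v" and "A *v (matrix_inv A *v v) = v"
  using matrix_inv_inverse[OF assms] by (simp_all add: matrix_vector_mul_assoc)

section \<open>Exponentials and the measure \<open>deltaB\<close>\<close>

lemma expo_add_left: "expo (u + v) x = expo u x * expo v x"
  by (simp add: expo_def inner_add_left distrib_left cis_mult)

lemma expo_add_right: "expo l (x + y) = expo l x * expo l y"
  by (simp add: expo_def inner_add_right distrib_left cis_mult)

lemma expo_commute: "expo l x = expo x l"
  by (simp add: expo_def inner_commute)

lemma norm_expo [simp]: "norm (expo l x) = 1"
  by (simp add: expo_def)

lemma expo_nonzero [simp]: "expo l x \<noteq> 0"
  using norm_expo[of l x] by (auto simp del: norm_expo)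

lemma expo_zero [simp]: "expo 0 x = 1" "expo l 0 = 1"
  by (simp_all add: expo_def)

lemma cnj_expo: "cnj (expo l x) = expo (- l) x"
  by (simp add: expo_def cis_cnj)

lemma expo_mult_cnj: "expo l x * cnj (expo l' x) = expo (l - l') x"
  by (simp add: expo_def cis_cnj cis_mult inner_diff_left algebra_simps)

lemma borel_measurable_expo [measurable]: "expo l \<in> borel_measurable borel"
  unfolding expo_def[abs_def] by (intro borel_measurable_continuous_onI continuous_intros)

lemma borel_measurable_cnj [measurable (raw)]:
  assumes "f \<in> borel_measurable M"
  shows "(\<lambda>x. cnj (f x)) \<in> borel_measurable M"
proof -
  have "cnj \<in> borel_measurable borel"
    by (intro borel_measurable_continuous_onI continuous_intros)
  with assms show ?thesis by (rule measurable_compose)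
qed

lemma expo_tau:
  assumes "invertible R"
  shows "expo l (tau R b x) = expo (matrix_inv (transpose R) *v l) (x + b)"
  using assms by (simp add: tau_def expo_def matrix_inv_transpose dot_lmul_matrix)

lemma borel_measurable_tau [measurable]: "tau R b \<in> borel_measurable borel"
proof -
  have "continuous_on UNIV ((*v) (matrix_inv R) \<circ> (\<lambda>x. x + b))"
    by (intro continuous_on_compose continuous_intros)
  then show ?thesis
    unfolding tau_def[abs_def] comp_def by (rule borel_measurable_continuous_onI)
qed

lemma Per_shift:
  fixes f :: "'a::ab_group_add \<Rightarrow> 'b"
  assumes "t \<in> Per f"
  shows "f (x + t) = f x" and "f (x - t) = f x"
proof -
  have "\<forall>y. f (y + t) = f y" using assms by (simp add: Per_def)
  from this[rule_format, of x] this[rule_format, of "x - t"] show "f (x + t) = f x" "f (x - t) = f x"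
    by simp_all
qed

lemma deltaB_hat_zero: "finite B \<Longrightarrow> B \<noteq> {} \<Longrightarrow> deltaB_hat B 0 = 1"
  by (simp add: deltaB_hat_def)

lemma sum_expo_mult_cnj:
  assumes "finite B" "B \<noteq> {}"
  shows "(\<Sum>y\<in>B. expo u y * cnj (expo v y)) = of_nat (card B) * deltaB_hat B (u - v)"
  using assms by (simp add: expo_mult_cnj deltaB_hat_def expo_commute[of "u - v"])

text \<open>At a period \<open>l\<close>, \<open>deltaB_hat B l = deltaB_hat B 0 = 1\<close> is an average of the unimodular
  numbers \<open>expo b l\<close>, so all of them equal \<open>1\<close>.\<close>
lemma Per_deltaB_hat_imp_expo_eq_1:
  assumes "finite B" "l \<in> Per (deltaB_hat B)" "b \<in> B"
  shows "expo l b = 1"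
proof -
  have "B \<noteq> {}" using assms(3) by auto
  have "deltaB_hat B (0 + l) = deltaB_hat B 0" using assms(2) unfolding Per_def by blast
  then have "(\<Sum>b\<in>B. expo b l) = of_nat (card B)"
    using assms(1) \<open>B \<noteq> {}\<close> by (simp add: deltaB_hat_def card_gt_0_iff)
  then have "Re (\<Sum>b\<in>B. expo b l) = real (card B)" by simp
  then have "(\<Sum>b\<in>B. cos (2 * pi * (b \<bullet> l))) = (\<Sum>b\<in>B. 1)"
    by (simp add: expo_def Re_sum)
  then have "(\<Sum>b\<in>B. 1 - cos (2 * pi * (b \<bullet> l))) = 0"
    by (simp add: sum_subtractf)
  then have "cos (2 * pi * (b \<bullet> l)) = 1"
    using assms(1,3) by (subst (asm) sum_nonneg_eq_0_iff) auto
  moreover from this have "sin (2 * pi * (b \<bullet> l)) = 0"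
    using sin_cos_squared_add[of "2 * pi * (b \<bullet> l)"] by (simp add: power2_eq_square)
  ultimately show ?thesis by (simp add: expo_def inner_commute cis.code complex_eq_iff)
qed

lemma integral_deltaB:
  fixes f :: "real^'n \<Rightarrow> complex"
  assumes "finite B" "B \<noteq> {}" "f \<in> borel_measurable borel"
  shows "(LINT x|deltaB B. f x) = (\<Sum>b\<in>B. f b) / of_nat (card B)"
proof -
  have m: "(\<lambda>x. x) \<in> measurable (measure_pmf (pmf_of_set B)) borel" by simp
  have "integral\<^sup>L (measure_pmf (pmf_of_set B)) f = (\<Sum>b\<in>B. pmf (pmf_of_set B) b *\<^sub>R f b)"
    by (rule integral_measure_pmf[OF assms(1)]) (use assms in auto)
  then show ?thesis
    unfolding deltaB_def integral_distr[OF m assms(3)] using assms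
    by (simp add: sum_divide_distrib scaleR_conv_of_real)
qed

text \<open>Dedekind's argument: subtracting \<open>expo b0 y\<close> times the relation from its shift by \<open>y\<close>
  eliminates \<open>b0\<close>; a shift with \<open>(b - b0) \<bullet> y = 1/2\<close> shows that no other coefficient survives.\<close>
lemma expo_linear_independent:
  assumes "finite B" "\<And>w. (\<Sum>b\<in>B. \<alpha> b * expo b w) = 0" "b \<in> B"
  shows "\<alpha> b = 0"
  using assms
proof (induction B arbitrary: \<alpha> b rule: finite_induct)
  case empty then show ?case by simp
next
  case (insert b0 B)
  have rel: "(\<Sum>b\<in>B. \<alpha> b * expo b w) + \<alpha> b0 * expo b0 w = 0" for w
    using insert.prems(1)[of w] insert.hyps by (simp add: add.commute)
  have "(\<Sum>b\<in>B. \<alpha> b * (expo b y - expo b0 y) * expo b w) = 0" for w y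
  proof -
    have "(\<Sum>b\<in>B. \<alpha> b * (expo b y - expo b0 y) * expo b w)
        = ((\<Sum>b\<in>B. \<alpha> b * expo b (w + y)) + \<alpha> b0 * expo b0 (w + y))
          - expo b0 y * ((\<Sum>b\<in>B. \<alpha> b * expo b w) + \<alpha> b0 * expo b0 w)"
      by (simp add: expo_add_right algebra_simps sum_subtractf sum_distrib_left)
    then show ?thesis by (simp only: rel) simp
  qed
  then have IH: "\<alpha> b * (expo b y - expo b0 y) = 0" if "b \<in> B" for b y
    using insert.IH[of "\<lambda>b. \<alpha> b * (expo b y - expo b0 y)" b, OF _ that] by simp
  have \<alpha>B: "\<alpha> b = 0" if "b \<in> B" for b
  proof -
    define y where "y = (1 / (2 * (norm (b - b0))\<^sup>2)) *\<^sub>R (b - b0)"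
    have "b \<noteq> b0" using that insert.hyps by auto
    then have half: "(b - b0) \<bullet> y = 1/2" by (simp add: y_def power2_norm_eq_inner)
    have "expo (b - b0) y = -1" unfolding expo_def half by simp
    then have "expo b y - expo b0 y = -2 * expo b0 y"
      using expo_add_left[of b0 "b - b0" y] by simp
    with IH[OF that, of y] show ?thesis by simp
  qed
  then have "\<alpha> b0 = 0" using rel[of 0] by (simp add: sum.neutral)
  with \<alpha>B insert.prems(2) show ?case by auto
qed

text \<open>Completeness applied to the residual of the point mass at \<open>b\<close> after projecting onto the
  family gives \<open>1 - card I / card B = 0\<close>.\<close>
lemma card_orthogonal_complete_expo:
  fixes c :: "'i \<Rightarrow> real^'n"
  assumes B: "finite B" "B \<noteq> {}" and I: "finite I"
    and orth: "\<And>i j. i \<in> I \<Longrightarrow> j \<in> I \<Longrightarrow> i \<noteq> j \<Longrightarrow> deltaB_hat B (c i - c j) = 0"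
    and compl: "\<And>g. \<forall>i\<in>I. (\<Sum>y\<in>B. g y * cnj (expo (c i) y)) = 0 \<Longrightarrow> \<forall>b\<in>B. g b = 0"
  shows "card I = card B"
proof -
  have N: "card B > 0" using B by (simp add: card_gt_0_iff)
  have ip: "(\<Sum>y\<in>B. expo (c i) y * cnj (expo (c j) y)) = (if i = j then of_nat (card B) else 0)"
    if "i \<in> I" "j \<in> I" for i j
    using that orth[of i j] B by (simp add: sum_expo_mult_cnj deltaB_hat_zero)
  obtain b where b: "b \<in> B" using B by blast
  define \<alpha> where "\<alpha> i = cnj (expo (c i) b) / of_nat (card B)" for i
  define r where "r x = (if x = b then 1 else 0) - (\<Sum>i\<in>I. \<alpha> i * expo (c i) x)" for x
  have "(\<Sum>y\<in>B. r y * cnj (expo (c j) y)) = 0" if j: "j \<in> I" for j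
  proof -
    have "(\<Sum>y\<in>B. r y * cnj (expo (c j) y))
        = (\<Sum>y\<in>B. (if y = b then cnj (expo (c j) b) else 0))
          - (\<Sum>y\<in>B. \<Sum>i\<in>I. \<alpha> i * (expo (c i) y * cnj (expo (c j) y)))"
      by (simp add: r_def left_diff_distrib sum_subtractf sum_distrib_right mult.assoc
          if_distrib[of "\<lambda>z. z * _"] cong: if_cong)
    also have "\<dots> = cnj (expo (c j) b) - (\<Sum>i\<in>I. \<alpha> i * (\<Sum>y\<in>B. expo (c i) y * cnj (expo (c j) y)))"
      using b B by (simp add: sum.swap[of _ B] sum_distrib_left)
    also have "\<dots> = cnj (expo (c j) b) - (\<Sum>i\<in>I. if i = j then cnj (expo (c i) b) else 0)"
      using N by (intro arg_cong2[where f = "(-)"] refl sum.cong) (auto simp: ip[OF _ j] \<alpha>_def)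
    also have "\<dots> = 0" using j I by simp
    finally show ?thesis .
  qed
  then have "r b = 0" using compl b by blast
  moreover have "r b = 1 - of_nat (card I) / of_nat (card B)"
    using expo_mult_cnj[of "c i" b "c i" for i]
    by (simp add: r_def \<alpha>_def mult.commute[of _ "expo _ b"] flip: sum_divide_distrib)
  ultimately have "of_nat (card I) = (of_nat (card B) :: complex)" using N by (simp add: field_simps)
  then show ?thesis by (simp only: of_nat_eq_iff)
qed

lemma deltaB_spectrum_of_orthogonal_complete:
  fixes c :: "'i \<Rightarrow> real^'n"
  assumes B: "finite B" "B \<noteq> {}"
    and orth: "\<And>i j. i \<in> I \<Longrightarrow> j \<in> I \<Longrightarrow> i \<noteq> j \<Longrightarrow> deltaB_hat B (c i - c j) = 0"
    and compl: "\<And>g. \<forall>i\<in>I. (\<Sum>y\<in>B. g y * cnj (expo (c i) y)) = 0 \<Longrightarrow> \<forall>b\<in>B. g b = 0"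
  shows "is_spectrum (deltaB B) (c ` I)"
  unfolding is_spectrum_def
proof (intro conjI ballI impI)
  fix l l' assume "l \<in> c ` I" "l' \<in> c ` I"
  then obtain i j where ij: "i \<in> I" "j \<in> I" "l = c i" "l' = c j" by blast
  have "(LINT x|deltaB B. expo l x * cnj (expo l' x)) = (\<Sum>b\<in>B. expo (l - l') b) / of_nat (card B)"
    by (simp add: expo_mult_cnj integral_deltaB[OF B borel_measurable_expo])
  also have "\<dots> = deltaB_hat B (l - l')" by (simp add: deltaB_hat_def expo_commute[of "l - l'"])
  finally show "(LINT x|deltaB B. expo l x * cnj (expo l' x)) = (if l = l' then 1 else 0)"
    using B ij orth[of i j] by (auto simp: deltaB_hat_zero)
next
  fix f :: "real^'n \<Rightarrow> complex"
  assume "f \<in> borel_measurable (deltaB B)"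
    and orth_f: "\<forall>l\<in>c ` I. (LINT x|deltaB B. f x * cnj (expo l x)) = 0"
  then have [measurable]: "f \<in> borel_measurable borel" by (simp add: deltaB_def)
  have "(\<Sum>y\<in>B. f y * cnj (expo (c i) y)) = 0" if "i \<in> I" for i
    using orth_f that B by (simp add: integral_deltaB cnj_expo card_gt_0_iff)
  then have "\<forall>b\<in>B. f b = 0" using compl by blast
  moreover have "(\<lambda>x. x) \<in> measurable (measure_pmf (pmf_of_set B)) borel" by simp
  ultimately show "AE x in deltaB B. f x = 0"
    unfolding deltaB_def using B by (simp add: AE_distr_iff AE_measure_pmf_iff)
qed

section \<open>Bounded densities of transfer functionals\<close>

lemma AE_le_of_nn_integral_indicator_le:
  fixes r :: "'a \<Rightarrow> ennreal"
  assumes fin: "emeasure M (space M) \<noteq> \<infinity>" "c \<noteq> \<infinity>" and r[measurable]: "r \<in> borel_measurable M"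
    and le: "\<And>A. A \<in> sets M \<Longrightarrow> (\<integral>\<^sup>+x. r x * indicator A x \<partial>M) \<le> c * emeasure M A"
  shows "AE x in M. r x \<le> c"
proof -
  define A where "A = {x \<in> space M. c < r x}"
  have A[measurable]: "A \<in> sets M" unfolding A_def by measurable
  have cA: "(\<integral>\<^sup>+x. c * indicator A x \<partial>M) = c * emeasure M A"
    by (simp add: nn_integral_cmult_indicator)
  have "c * emeasure M A \<noteq> \<infinity>"
    using fin emeasure_space[of M A] by (auto simp: ennreal_mult_eq_top_iff top_unique)
  then have cA_finite: "(\<integral>\<^sup>+x. c * indicator A x \<partial>M) \<noteq> \<infinity>" unfolding cA .
  have "AE x in M. r x * indicator A x \<le> c * indicator A x"
  proof (rule ccontr)
    assume "\<not> (AE x in M. r x * indicator A x \<le> c * indicator A x)"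
    then have "(\<integral>\<^sup>+x. c * indicator A x \<partial>M) < (\<integral>\<^sup>+x. r x * indicator A x \<partial>M)"
      by (intro nn_integral_less[OF _ _ cA_finite]) (auto simp: A_def split: split_indicator intro: less_imp_le)
    with le[OF A] cA show False by simp
  qed
  with AE_space show ?thesis
    by eventually_elim (auto simp: A_def not_less split: split_indicator_asm)
qed

definition bounded_density :: "'a measure \<Rightarrow> (('a \<Rightarrow> complex) \<Rightarrow> complex) \<Rightarrow> ('a \<Rightarrow> complex) \<Rightarrow> bool" where
  "bounded_density M \<Phi> \<psi> \<longleftrightarrow> \<psi> \<in> borel_measurable M \<and> bounded (\<psi> ` space M) \<and>
     (\<forall>f \<in> borel_measurable M. bounded (f ` space M) \<longrightarrow> \<Phi> f = (\<integral>x. f x * \<psi> x \<partial>M))"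

lemma integrable_mult_bounded:
  fixes f g :: "'a \<Rightarrow> complex"
  assumes "finite_measure M" "f \<in> borel_measurable M" "g \<in> borel_measurable M"
    and "bounded (f ` space M)" "bounded (g ` space M)"
  shows "integrable M (\<lambda>x. f x * g x)"
proof -
  interpret finite_measure M by fact
  obtain F G where "\<forall>x\<in>space M. norm (f x) \<le> F" "\<forall>x\<in>space M. norm (g x) \<le> G"
    using assms(4,5) by (auto simp: bounded_iff)
  with assms(2,3) show ?thesis
    by (intro integrable_const_bound[where B = "F * G"] AE_I2)
       (auto simp: norm_mult intro!: mult_mono order_trans[OF norm_ge_zero])
qed

lemma bounded_density_cong:
  assumes "bounded_density M \<Phi> \<psi>"
    and "\<And>f. f \<in> borel_measurable M \<Longrightarrow> bounded (f ` space M) \<Longrightarrow> \<Phi> f = \<Phi>' f"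
  shows "bounded_density M \<Phi>' \<psi>"
  using assms by (simp add: bounded_density_def)

lemma bounded_density_sum:
  assumes "finite_measure M" "finite I" "\<And>i. i \<in> I \<Longrightarrow> bounded_density M (\<Phi> i) (\<psi> i)"
  shows "bounded_density M (\<lambda>f. \<Sum>i\<in>I. c i * \<Phi> i f) (\<lambda>x. \<Sum>i\<in>I. c i * \<psi> i x)"
  using assms(2,3)
proof (induction I rule: finite_induct)
  case empty
  then show ?case by (auto simp: bounded_density_def bounded_iff)
next
  case (insert i I)
  define \<Psi> where "\<Psi> = (\<lambda>x. \<Sum>j\<in>I. c j * \<psi> j x)"
  have i: "\<psi> i \<in> borel_measurable M" "bounded (\<psi> i ` space M)"
    "\<And>f. f \<in> borel_measurable M \<Longrightarrow> bounded (f ` space M) \<Longrightarrow> \<Phi> i f = (\<integral>x. f x * \<psi> i x \<partial>M)"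
    using insert.prems[of i] by (auto simp: bounded_density_def)
  have "bounded_density M (\<lambda>f. \<Sum>j\<in>I. c j * \<Phi> j f) \<Psi>"
    unfolding \<Psi>_def using insert.prems by (intro insert.IH) auto
  then have I: "\<Psi> \<in> borel_measurable M" "bounded (\<Psi> ` space M)"
    "\<And>f. f \<in> borel_measurable M \<Longrightarrow> bounded (f ` space M) \<Longrightarrow>
      (\<Sum>j\<in>I. c j * \<Phi> j f) = (\<integral>x. f x * \<Psi> x \<partial>M)"
    by (auto simp: bounded_density_def)
  have "bounded ((\<lambda>x. c i * \<psi> i x) ` space M)"
    using bounded_linear_image[OF i(2) bounded_linear_mult_right[of "c i"]] by (simp add: image_image)
  then have bounded: "bounded ((\<lambda>x. c i * \<psi> i x + \<Psi> x) ` space M)"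
    by (rule bounded_plus_comp[OF _ I(2)])
  have "c i * \<Phi> i f + (\<Sum>j\<in>I. c j * \<Phi> j f) = (\<integral>x. f x * (c i * \<psi> i x + \<Psi> x) \<partial>M)"
    if "f \<in> borel_measurable M" "bounded (f ` space M)" for f
    using that i I integrable_mult_bounded[OF assms(1) that(1) _ that(2)]
    by (simp add: distrib_left mult.left_commute)
  with insert.hyps i(1) I(1) bounded show ?case
    by (simp add: bounded_density_def \<Psi>_def)
qed

lemma bounded_density_of_dominated:
  assumes "finite_measure M" "sets N = sets M" "0 \<le> C"
    and N_le: "\<And>A. A \<in> sets M \<Longrightarrow> emeasure N A \<le> ennreal C * emeasure M A"
  obtains \<rho> where "\<rho> \<in> borel_measurable M" "\<And>x. 0 \<le> \<rho> x \<and> \<rho> x \<le> C"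
    and "density M (\<lambda>x. ennreal (\<rho> x)) = N"
proof -
  interpret finite_measure M by fact
  have ac: "absolutely_continuous M N"
    unfolding absolutely_continuous_def
  proof
    fix A assume "A \<in> null_sets M"
    with N_le[of A] assms(2) show "A \<in> null_sets N" by (auto simp: null_sets_def)
  qed
  define r where "r = RN_deriv M N"
  have [measurable]: "r \<in> borel_measurable M" by (simp add: r_def)
  have density_r: "density M r = N" unfolding r_def using ac assms(2) by (rule density_RN_deriv)
  have r_le: "AE x in M. r x \<le> ennreal C"
  proof (rule AE_le_of_nn_integral_indicator_le)
    show "(\<integral>\<^sup>+x. r x * indicator A x \<partial>M) \<le> ennreal C * emeasure M A" if "A \<in> sets M" for A
      using N_le[OF that] that by (simp flip: density_r add: emeasure_density)
  qed simp_all
  define \<rho> where "\<rho> x = min (enn2real (r x)) C" for x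
  have "AE x in M. ennreal (\<rho> x) = r x"
    using r_le
  proof eventually_elim
    case (elim x)
    then have "r x \<noteq> \<infinity>" by (auto simp: top_unique)
    have "enn2real (r x) \<le> C"
      using enn2real_mono[OF elim] \<open>0 \<le> C\<close> by simp
    with \<open>r x \<noteq> \<infinity>\<close> show ?case by (simp add: \<rho>_def less_top)
  qed
  then have "density M (\<lambda>x. ennreal (\<rho> x)) = N"
    unfolding density_r[symmetric] by (intro density_cong) (auto simp: \<rho>_def)
  moreover have "\<rho> \<in> borel_measurable M" unfolding \<rho>_def by measurable
  moreover have "0 \<le> \<rho> x \<and> \<rho> x \<le> C" for x using \<open>0 \<le> C\<close> by (simp add: \<rho>_def)
  ultimately show ?thesis using that by blast
qed

lemma transfer_density_nonneg:
  fixes T :: "'a \<Rightarrow> 'a" and k :: "'a \<Rightarrow> real"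
  assumes "finite_measure M" and T[measurable]: "T \<in> M \<rightarrow>\<^sub>M M" and "0 \<le> C"
    and dom: "\<And>A. A \<in> sets M \<Longrightarrow> emeasure M (T -` A \<inter> space M) \<le> ennreal C * emeasure M A"
    and k[measurable]: "k \<in> borel_measurable M" and k_bounds: "\<And>x. x \<in> space M \<Longrightarrow> 0 \<le> k x \<and> k x \<le> 1"
  obtains \<rho> where "\<rho> \<in> borel_measurable M" "\<And>x. 0 \<le> \<rho> x \<and> \<rho> x \<le> C"
    and "\<And>f :: 'a \<Rightarrow> 'b::{banach, second_countable_topology}. f \<in> borel_measurable M \<Longrightarrow>
           (\<integral>x. k x *\<^sub>R f (T x) \<partial>M) = (\<integral>x. \<rho> x *\<^sub>R f x \<partial>M)"
proof -
  define N where "N = distr (density M k) M T"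
  have "emeasure N A \<le> ennreal C * emeasure M A" if A[measurable]: "A \<in> sets M" for A
  proof -
    have "emeasure N A = (\<integral>\<^sup>+x. ennreal (k x) * indicator (T -` A \<inter> space M) x \<partial>M)"
      by (simp add: N_def emeasure_distr emeasure_density)
    also have "\<dots> \<le> (\<integral>\<^sup>+x. indicator (T -` A \<inter> space M) x \<partial>M)"
      by (intro nn_integral_mono) (auto split: split_indicator simp: k_bounds)
    also have "\<dots> \<le> ennreal C * emeasure M A" using dom[OF A] by simp
    finally show ?thesis .
  qed
  then obtain \<rho> where [measurable]: "\<rho> \<in> borel_measurable M" and \<rho>_bounds: "\<And>x. 0 \<le> \<rho> x \<and> \<rho> x \<le> C"
    and density_\<rho>: "density M (\<lambda>x. ennreal (\<rho> x)) = N"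
    using bounded_density_of_dominated[OF assms(1) _ \<open>0 \<le> C\<close>] by (metis N_def sets_distr)
  show ?thesis
  proof (rule that[OF _ \<rho>_bounds])
    fix f :: "'a \<Rightarrow> 'b" assume [measurable]: "f \<in> borel_measurable M"
    have "(\<integral>x. k x *\<^sub>R f (T x) \<partial>M) = integral\<^sup>L N f"
      by (simp add: N_def integral_distr integral_density k_bounds)
    also have "\<dots> = (\<integral>x. \<rho> x *\<^sub>R f x \<partial>M)"
      by (simp flip: density_\<rho> add: integral_density \<rho>_bounds)
    finally show "(\<integral>x. k x *\<^sub>R f (T x) \<partial>M) = (\<integral>x. \<rho> x *\<^sub>R f x \<partial>M)" .
  qed simp
qed

text \<open>The four summands are the positive and negative parts of \<open>Re z\<close> and \<open>Im z\<close>.\<close>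
lemma complex_eq_sum_nonneg_parts:
  "z = (\<Sum>j<4. \<i> ^ j * complex_of_real (max 0 (Re (cnj (\<i> ^ j) * z))))"
  by (simp add: numeral_eq_Suc complex_eq_iff max_def)

lemma transfer_bounded_density:
  fixes T :: "'a \<Rightarrow> 'a" and k :: "'a \<Rightarrow> complex"
  assumes "finite_measure M" and T[measurable]: "T \<in> M \<rightarrow>\<^sub>M M" and "0 \<le> C"
    and dom: "\<And>A. A \<in> sets M \<Longrightarrow> emeasure M (T -` A \<inter> space M) \<le> ennreal C * emeasure M A"
    and k[measurable]: "k \<in> borel_measurable M" and k_bound: "\<And>x. x \<in> space M \<Longrightarrow> norm (k x) \<le> 1"
  shows "\<exists>\<psi>. bounded_density M (\<lambda>f. \<integral>x. f (T x) * k x \<partial>M) \<psi>"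
proof -
  define kp where "kp j x = max 0 (Re (cnj (\<i> ^ j) * k x))" for j x
  have [measurable]: "kp j \<in> borel_measurable M" for j unfolding kp_def by measurable
  have kp_bounds: "0 \<le> kp j x \<and> kp j x \<le> 1" if "x \<in> space M" for j x
    using abs_Re_le_cmod[of "cnj (\<i> ^ j) * k x"] k_bound[OF that]
    by (simp add: kp_def norm_mult norm_power)
  then have kp_bounded: "bounded ((\<lambda>x. complex_of_real (kp j x)) ` space M)" for j
    by (auto simp: bounded_iff intro!: exI[of _ 1])
  have "\<exists>\<psi>. bounded_density M (\<lambda>f. \<integral>x. f (T x) * kp j x \<partial>M) \<psi>" for j
  proof (rule transfer_density_nonneg[OF assms(1,2,3) dom, of "kp j"])
    fix \<rho> assume \<rho>: "\<rho> \<in> borel_measurable M" "\<And>x. 0 \<le> \<rho> x \<and> \<rho> x \<le> C"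
      "\<And>f :: 'a \<Rightarrow> complex. f \<in> borel_measurable M \<Longrightarrow>
         (\<integral>x. kp j x *\<^sub>R f (T x) \<partial>M) = (\<integral>x. \<rho> x *\<^sub>R f x \<partial>M)"
    then have "bounded_density M (\<lambda>f. \<integral>x. f (T x) * kp j x \<partial>M) (\<lambda>x. \<rho> x)"
      by (auto simp: bounded_density_def bounded_iff scaleR_conv_of_real mult.commute intro!: exI[of _ C])
    then show ?thesis by blast
  qed (use kp_bounds in auto)
  then obtain \<psi> where \<psi>: "\<And>j. bounded_density M (\<lambda>f. \<integral>x. f (T x) * kp j x \<partial>M) (\<psi> j)"
    by (metis choice)
  have "bounded_density M (\<lambda>f. \<Sum>j<4. \<i> ^ j * (\<integral>x. f (T x) * kp j x \<partial>M)) (\<lambda>x. \<Sum>j<4. \<i> ^ j * \<psi> j x)"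
    by (intro bounded_density_sum \<psi> assms(1)) simp
  moreover have "(\<Sum>j<4. \<i> ^ j * (\<integral>x. f (T x) * kp j x \<partial>M)) = (\<integral>x. f (T x) * k x \<partial>M)"
    if [measurable]: "f \<in> borel_measurable M" and "bounded (f ` space M)" for f :: "'a \<Rightarrow> complex"
  proof -
    have "(\<lambda>x. f (T x)) ` space M \<subseteq> f ` space M"
      using measurable_space[OF T] by auto
    then have "bounded ((\<lambda>x. f (T x)) ` space M)"
      by (rule bounded_subset[OF \<open>bounded (f ` space M)\<close>])
    then have "integrable M (\<lambda>x. f (T x) * kp j x)" for j
      by (intro integrable_mult_bounded[OF assms(1)] kp_bounded) simp_all
    then have "(\<Sum>j<4. \<i> ^ j * (\<integral>x. f (T x) * kp j x \<partial>M)) = (\<integral>x. (\<Sum>j<4. \<i> ^ j * (f (T x) * kp j x)) \<partial>M)"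
      by (simp only: Bochner_Integration.integral_sum integral_mult_right_zero integrable_mult_right)
    also have "\<dots> = (\<integral>x. f (T x) * k x \<partial>M)"
      by (subst (2) complex_eq_sum_nonneg_parts) (simp add: kp_def sum_distrib_left mult_ac)
    finally show ?thesis .
  qed
  ultimately show ?thesis by (blast intro: bounded_density_cong)
qed

section \<open>The invariant measure\<close>

locale ifs =
  fixes R :: "real^'n^'n" and B :: "(real^'n) set" and \<mu> :: "(real^'n) measure"
  assumes invertible: "invertible R" and finite_B: "finite B" and B_nonempty: "B \<noteq> {}"
    and invariant: "ifs_invariant R B \<mu>"
begin

lemma sets_mu [measurable_cong, simp]: "sets \<mu> = sets borel"
  using invariant by (simp add: ifs_invariant_def)

lemma space_mu [simp]: "space \<mu> = UNIV"
  using sets_eq_imp_space_eq[OF sets_mu] by simp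

sublocale prob_space \<mu>
  using invariant by (simp add: ifs_invariant_def)

lemma measurable_tau_kernel:
  "(\<lambda>b. distr \<mu> borel (tau R b)) \<in> measure_pmf (pmf_of_set B) \<rightarrow>\<^sub>M subprob_algebra borel"
  by (auto simp: space_subprob_algebra subprob_space.subprob_space_distr subprob_space_axioms)

lemma mu_eq_bind: "\<mu> = measure_pmf (pmf_of_set B) \<bind> (\<lambda>b. distr \<mu> borel (tau R b))"
proof (rule measure_eqI)
  show "sets \<mu> = sets (measure_pmf (pmf_of_set B) \<bind> (\<lambda>b. distr \<mu> borel (tau R b)))"
    using sets_bind[OF sets_kernel[OF measurable_tau_kernel]] by simp
next
  fix A assume "A \<in> sets \<mu>"
  then have "emeasure (measure_pmf (pmf_of_set B) \<bind> (\<lambda>b. distr \<mu> borel (tau R b))) A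
      = (\<Sum>b\<in>B. emeasure \<mu> (tau R b -` A)) / of_nat (card B)"
    using finite_B B_nonempty measurable_tau_kernel
    by (simp add: emeasure_bind[where N = borel] nn_integral_pmf_of_set emeasure_distr)
  also have "\<dots> = emeasure \<mu> A"
    using invariant \<open>A \<in> sets \<mu>\<close> by (simp add: ifs_invariant_def)
  finally show "emeasure \<mu> A = emeasure (measure_pmf (pmf_of_set B) \<bind> (\<lambda>b. distr \<mu> borel (tau R b))) A"
    by simp
qed

lemma integral_ifs_real:
  fixes f :: "real^'n \<Rightarrow> real"
  assumes [measurable]: "f \<in> borel_measurable borel" and bound: "\<And>x. \<bar>f x\<bar> \<le> C"
  shows "(\<integral>x. f x \<partial>\<mu>) = (\<Sum>b\<in>B. \<integral>x. f (tau R b x) \<partial>\<mu>) / card B"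
proof -
  have "(\<integral>x. f x \<partial>\<mu>)
      = (\<integral>b. (\<integral>x. f x \<partial>distr \<mu> borel (tau R b)) \<partial>measure_pmf (pmf_of_set B))"
    by (subst mu_eq_bind, rule integral_bind[OF _ bound measurable_tau_kernel, where B' = 1])
       (auto simp: measure_pmf.finite_measure emeasure_distr intro!: AE_I2 emeasure_le_1)
  then show ?thesis
    using finite_B B_nonempty by (simp add: integral_pmf_of_set integral_distr)
qed

lemma integral_ifs:
  fixes f :: "real^'n \<Rightarrow> complex"
  assumes [measurable]: "f \<in> borel_measurable borel" and bound: "\<And>x. norm (f x) \<le> C"
  shows "(\<integral>x. f x \<partial>\<mu>) = (\<Sum>b\<in>B. \<integral>x. f (tau R b x) \<partial>\<mu>) / card B"
proof -
  have int: "integrable \<mu> f" "integrable \<mu> (\<lambda>x. f (tau R b x))" for b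
    using bound by (auto intro!: integrable_const_bound[where B = C])
  have "Re (\<integral>x. f x \<partial>\<mu>) = (\<Sum>b\<in>B. Re (\<integral>x. f (tau R b x) \<partial>\<mu>)) / card B"
    using int
    by (simp add: integral_ifs_real[where C = C] order_trans[OF abs_Re_le_cmod bound] flip: integral_Re)
  moreover have "Im (\<integral>x. f x \<partial>\<mu>) = (\<Sum>b\<in>B. Im (\<integral>x. f (tau R b x) \<partial>\<mu>)) / card B"
    using int
    by (simp add: integral_ifs_real[where C = C] order_trans[OF abs_Im_le_cmod bound] flip: integral_Im)
  ultimately show ?thesis by (simp add: complex_eq_iff Re_divide_of_nat Im_divide_of_nat)
qed

definition mu_hat :: "real^'n \<Rightarrow> complex" where
  "mu_hat v = (\<integral>x. expo v x \<partial>\<mu>)"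

lemma mu_hat_uminus: "mu_hat (- v) = cnj (mu_hat v)"
  by (simp add: mu_hat_def cnj_expo[symmetric])

lemma mu_hat_transpose: "mu_hat (transpose R *v v) = deltaB_hat B v * mu_hat v"
proof -
  have "mu_hat (transpose R *v v) = (\<Sum>b\<in>B. \<integral>x. expo (transpose R *v v) (tau R b x) \<partial>\<mu>) / card B"
    unfolding mu_hat_def by (rule integral_ifs[where C = 1]) simp_all
  also have "\<dots> = (\<Sum>b\<in>B. expo v b * mu_hat v) / card B"
  proof -
    have "matrix_inv (transpose R) *v (transpose R *v v) = v"
      by (rule matrix_inv_mult_vector(1)[OF transpose_invertible[OF invertible]])
    then have "expo (transpose R *v v) (tau R b x) = expo v b * expo v x" for b x
      by (simp only: expo_tau[OF invertible] expo_add_right mult.commute)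
    then show ?thesis by (simp add: mu_hat_def)
  qed
  also have "\<dots> = deltaB_hat B v * mu_hat v"
    by (simp add: deltaB_hat_def sum_distrib_right expo_commute[of v])
  finally show ?thesis .
qed

lemma spectrum_nonempty: "is_spectrum \<mu> L \<Longrightarrow> L \<noteq> {}"
  unfolding is_spectrum_def by (auto dest!: bspec[of _ _ "\<lambda>_. 1"])

lemma spectrum_mu_hat_diff:
  "is_spectrum \<mu> L \<Longrightarrow> l \<in> L \<Longrightarrow> l' \<in> L \<Longrightarrow> l \<noteq> l' \<Longrightarrow> mu_hat (l - l') = 0"
  unfolding is_spectrum_def mu_hat_def by (auto simp: expo_mult_cnj)

lemma spectrum_AE_eq_0:
  assumes "is_spectrum \<mu> L" and [measurable]: "f \<in> borel_measurable borel"
    and "\<And>x. norm (f x) \<le> C" and "\<forall>l\<in>L. (\<integral>x. f x * cnj (expo l x) \<partial>\<mu>) = 0"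
  shows "AE x in \<mu>. f x = 0"
proof -
  have "integrable \<mu> (\<lambda>x. (norm (f x))\<^sup>2)"
    using assms(3) by (intro integrable_const_bound[where B = "C\<^sup>2"]) (auto intro!: AE_I2 power_mono)
  then show ?thesis using assms unfolding is_spectrum_def by simp
qed

lemma spectrum_mu_hat_nonzero:
  assumes "is_spectrum \<mu> L" shows "\<exists>l\<in>L. mu_hat (v - l) \<noteq> 0"
proof (rule ccontr)
  assume "\<not> (\<exists>l\<in>L. mu_hat (v - l) \<noteq> 0)"
  then have "AE x in \<mu>. expo v x = 0"
    by (intro spectrum_AE_eq_0[OF assms, where C = 1]) (auto simp: expo_mult_cnj mu_hat_def)
  then show False by simp
qed

lemma emeasure_tau_vimage_le:
  assumes "A \<in> sets borel" "b \<in> B"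
  shows "emeasure \<mu> (tau R b -` A) \<le> ennreal (card B) * emeasure \<mu> A"
proof -
  let ?S = "\<Sum>b'\<in>B. emeasure \<mu> (tau R b' -` A)"
  have "emeasure \<mu> (tau R b -` A) \<le> ?S"
    by (rule member_le_sum) (use assms finite_B in auto)
  also have "?S = ?S * of_nat (card B) / of_nat (card B)"
    using finite_B B_nonempty by (simp add: mult_divide_eq_ennreal card_gt_0_iff)
  also have "\<dots> = ennreal (card B) * (?S / of_nat (card B))"
    by (simp add: ennreal_times_divide mult.commute ennreal_of_nat_eq_real_of_nat)
  also have "?S / of_nat (card B) = emeasure \<mu> A"
    using invariant assms by (simp add: ifs_invariant_def)
  finally show ?thesis .
qed

lemma bounded_density_tau:
  fixes k :: "real^'n \<Rightarrow> complex"
  assumes "b \<in> B" and [measurable]: "k \<in> borel_measurable borel" and "\<And>x. norm (k x) \<le> 1"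
  shows "\<exists>\<psi>. bounded_density \<mu> (\<lambda>f. \<integral>x. f (tau R b x) * k x \<partial>\<mu>) \<psi>"
proof (rule transfer_bounded_density[of \<mu> "tau R b" "real (card B)" k])
  show "finite_measure \<mu>" by (rule finite_measure)
  show "tau R b \<in> \<mu> \<rightarrow>\<^sub>M \<mu>" "k \<in> borel_measurable \<mu>" by measurable
  show "0 \<le> real (card B)" by simp
  show "emeasure \<mu> (tau R b -` A \<inter> space \<mu>) \<le> ennreal (card B) * emeasure \<mu> A" if "A \<in> sets \<mu>" for A
    using emeasure_tau_vimage_le[of A b] that \<open>b \<in> B\<close> by simp
  show "norm (k x) \<le> 1" for x by fact
qed

lemma deltaB_hat_eq_0_of_disjoint_translates:
  assumes \<Lambda>: "is_spectrum \<mu> \<Lambda>"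
    and \<Lambda>i: "is_spectrum \<mu> \<Lambda>i" "\<Lambda>i \<subseteq> Per (deltaB_hat B)"
    and \<Lambda>j: "is_spectrum \<mu> \<Lambda>j" "\<Lambda>j \<subseteq> Per (deltaB_hat B)"
    and sub: "(\<lambda>l. ai + transpose R *v l) ` \<Lambda>i \<subseteq> \<Lambda>" "(\<lambda>l. aj + transpose R *v l) ` \<Lambda>j \<subseteq> \<Lambda>"
    and disj: "(\<lambda>l. ai + transpose R *v l) ` \<Lambda>i \<inter> (\<lambda>l. aj + transpose R *v l) ` \<Lambda>j = {}"
  shows "deltaB_hat B (matrix_inv (transpose R) *v ai - matrix_inv (transpose R) *v aj) = 0"
proof (rule ccontr)
  define d where "d = matrix_inv (transpose R) *v ai - matrix_inv (transpose R) *v aj"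
  assume "deltaB_hat B (matrix_inv (transpose R) *v ai - matrix_inv (transpose R) *v aj) \<noteq> 0"
  then have nz: "deltaB_hat B d \<noteq> 0" by (simp add: d_def)
  obtain l2 where l2: "l2 \<in> \<Lambda>j" using spectrum_nonempty[OF \<Lambda>j(1)] by blast
  have mu_hat_0: "mu_hat (d + l1 - l2) = 0" if l1: "l1 \<in> \<Lambda>i" for l1
  proof -
    have "mu_hat ((ai + transpose R *v l1) - (aj + transpose R *v l2)) = 0"
      by (rule spectrum_mu_hat_diff[OF \<Lambda>]) (use sub disj l1 l2 in blast)+
    moreover have "(ai + transpose R *v l1) - (aj + transpose R *v l2) = transpose R *v (d + l1 - l2)"
      using matrix_inv_mult_vector(2)[OF transpose_invertible[OF invertible]]
      by (simp add: d_def matrix_vector_right_distrib matrix_vector_mult_diff_distrib algebra_simps)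
    moreover have "l1 \<in> Per (deltaB_hat B)" "l2 \<in> Per (deltaB_hat B)" using l1 l2 \<Lambda>i(2) \<Lambda>j(2) by auto
    then have "deltaB_hat B (d + l1 - l2) = deltaB_hat B d" by (simp add: Per_shift)
    ultimately show ?thesis using nz mu_hat_transpose[of "d + l1 - l2"] by (metis mult_eq_0_iff)
  qed
  obtain l1 where "l1 \<in> \<Lambda>i" "mu_hat ((l2 - d) - l1) \<noteq> 0"
    using spectrum_mu_hat_nonzero[OF \<Lambda>i(1)] by blast
  moreover have "(l2 - d) - l1 = - (d + l1 - l2)" by simp
  ultimately show False using mu_hat_0 mu_hat_uminus by (metis complex_cnj_zero)
qed

lemma expo_transpose_tau_mult_cnj: "expo (transpose R *v w) (tau R b x) * cnj (expo w x) = expo w b"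
proof -
  have "expo (transpose R *v w) (tau R b x) * cnj (expo w x) = expo w b * (expo w x * cnj (expo w x))"
    using matrix_inv_mult_vector(1)[OF transpose_invertible[OF invertible]]
    by (simp only: expo_tau[OF invertible] expo_add_right mult_ac)
  then show ?thesis by (simp add: expo_mult_cnj)
qed

lemma sum_tau_functional_expo_eq_0:
  fixes g :: "real^'n \<Rightarrow> complex"
  assumes "l \<in> (\<Union>i\<in>I. (\<lambda>l. a i + transpose R *v l) ` \<Lambda>s i)"
    and per: "\<And>i. i \<in> I \<Longrightarrow> \<Lambda>s i \<subseteq> Per (deltaB_hat B)"
    and orth: "\<And>i. i \<in> I \<Longrightarrow> (\<Sum>y\<in>B. g y * cnj (expo (matrix_inv (transpose R) *v a i) y)) = 0"
  shows "(\<Sum>b\<in>B. cnj (g b) * (\<integral>x. expo l (tau R b x) * cnj (expo w x) \<partial>\<mu>)) = 0"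
proof -
  obtain i l' where i: "i \<in> I" "l' \<in> \<Lambda>s i" and l: "l = a i + transpose R *v l'"
    using assms(1) by blast
  define c where "c = matrix_inv (transpose R) *v a i"
  have expo_l_tau: "expo l (tau R b x) = expo c b * expo (c + l') x" if "b \<in> B" for b x
  proof -
    have "expo l' b = 1"
      using Per_deltaB_hat_imp_expo_eq_1[OF finite_B _ that] per i by blast
    moreover have "matrix_inv (transpose R) *v l = c + l'"
      using matrix_inv_mult_vector(1)[OF transpose_invertible[OF invertible]]
      by (simp only: l c_def matrix_vector_right_distrib)
    ultimately show ?thesis
      by (simp add: expo_tau[OF invertible] expo_add_left expo_add_right)
  qed
  have "(\<Sum>b\<in>B. cnj (g b) * (\<integral>x. expo l (tau R b x) * cnj (expo w x) \<partial>\<mu>))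
      = (\<Sum>b\<in>B. cnj (g b) * (expo c b * (\<integral>x. expo (c + l') x * cnj (expo w x) \<partial>\<mu>)))"
    by (intro sum.cong refl) (simp add: expo_l_tau mult.assoc)
  also have "\<dots> = cnj (\<Sum>b\<in>B. g b * cnj (expo c b)) * (\<integral>x. expo (c + l') x * cnj (expo w x) \<partial>\<mu>)"
    by (simp add: sum_distrib_right mult_ac)
  finally show ?thesis using orth[OF i(1)] by (simp add: c_def)
qed

text \<open>The bounded density \<open>\<Psi>\<close> of \<open>f \<mapsto> \<Sum>b\<in>B. cnj (g b) * \<integral>x. f (tau R b x) * cnj (expo w x) \<partial>\<mu>\<close>
  is orthogonal to the spectrum, hence zero; testing it against \<open>expo (transpose R *v w)\<close> leaves
  the character sum of \<open>cnj \<circ> g\<close> at \<open>w\<close>.\<close>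
lemma eq_0_of_orthogonal_to_translates:
  fixes g :: "real^'n \<Rightarrow> complex"
  assumes \<Lambda>: "is_spectrum \<mu> \<Lambda>"
    and cover: "\<Lambda> \<subseteq> (\<Union>i\<in>I. (\<lambda>l. a i + transpose R *v l) ` \<Lambda>s i)"
    and per: "\<And>i. i \<in> I \<Longrightarrow> \<Lambda>s i \<subseteq> Per (deltaB_hat B)"
    and orth: "\<And>i. i \<in> I \<Longrightarrow> (\<Sum>y\<in>B. g y * cnj (expo (matrix_inv (transpose R) *v a i) y)) = 0"
    and "b \<in> B"
  shows "g b = 0"
proof -
  have "(\<Sum>b\<in>B. cnj (g b) * expo b w) = 0" for w
  proof -
    have "\<forall>b\<in>B. \<exists>\<psi>. bounded_density \<mu> (\<lambda>f. \<integral>x. f (tau R b x) * cnj (expo w x) \<partial>\<mu>) \<psi>"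
      by (auto intro!: bounded_density_tau simp: cnj_expo)
    then obtain \<psi> where \<psi>: "\<forall>b\<in>B. bounded_density \<mu> (\<lambda>f. \<integral>x. f (tau R b x) * cnj (expo w x) \<partial>\<mu>) (\<psi> b)"
      by (rule bchoice[THEN exE])
    define \<Psi> where "\<Psi> = (\<lambda>x. \<Sum>b\<in>B. cnj (g b) * \<psi> b x)"
    have "bounded_density \<mu> (\<lambda>f. \<Sum>b\<in>B. cnj (g b) * (\<integral>x. f (tau R b x) * cnj (expo w x) \<partial>\<mu>)) \<Psi>"
      (is "bounded_density \<mu> ?\<Phi> \<Psi>")
      unfolding \<Psi>_def using \<psi> by (intro bounded_density_sum finite_B finite_measure) simp
    then have [measurable]: "\<Psi> \<in> borel_measurable borel" and "bounded (range \<Psi>)"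
      and \<Psi>: "\<And>f. f \<in> borel_measurable borel \<Longrightarrow> bounded (range f) \<Longrightarrow> ?\<Phi> f = (\<integral>x. f x * \<Psi> x \<partial>\<mu>)"
      by (simp_all add: bounded_density_def measurable_cong_sets[OF sets_mu refl])
    then obtain K where K: "\<And>x. norm (\<Psi> x) \<le> K" by (auto simp: bounded_iff)
    have bounded_expo: "bounded (range (expo v))" for v by (auto simp: bounded_iff intro!: exI[of _ 1])
    have "(\<integral>x. expo l x * \<Psi> x \<partial>\<mu>) = 0" if "l \<in> \<Lambda>" for l
    proof -
      have "(\<integral>x. expo l x * \<Psi> x \<partial>\<mu>) = ?\<Phi> (expo l)"
        by (rule \<Psi>[symmetric]) (simp_all add: bounded_expo)
      also have "\<dots> = 0"
        by (rule sum_tau_functional_expo_eq_0[where I = I and a = a and \<Lambda>s = \<Lambda>s])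
           (use cover that per orth in blast)+
      finally show ?thesis .
    qed
    then have "AE x in \<mu>. cnj (\<Psi> x) = 0"
      by (intro spectrum_AE_eq_0[OF \<Lambda>, where C = K]) (simp_all add: K mult.commute flip: complex_cnj_mult)
    have "(\<Sum>b\<in>B. cnj (g b) * expo w b) = ?\<Phi> (expo (transpose R *v w))"
      using prob_space by (simp only: expo_transpose_tau_mult_cnj) simp
    also have "\<dots> = (\<integral>x. expo (transpose R *v w) x * \<Psi> x \<partial>\<mu>)"
      by (rule \<Psi>) (simp_all add: bounded_expo)
    also have "\<dots> = 0"
      using \<open>AE x in \<mu>. cnj (\<Psi> x) = 0\<close> by (intro integral_eq_zero_AE) auto
    finally show ?thesis by (simp add: expo_commute[of w])
  qed
  then have "cnj (g b) = 0" by (rule expo_linear_independent[OF finite_B _ \<open>b \<in> B\<close>])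
  then show ?thesis by simp
qed

end

theorem proposition3p9:
  fixes R :: "real^'n^'n" and B :: "(real^'n) set" and \<mu> :: "(real^'n) measure"
    and \<Lambda> :: "(real^'n) set" and p :: nat
    and a :: "nat \<Rightarrow> real^'n" and \<Lambda>s :: "nat \<Rightarrow> (real^'n) set"
  assumes "expansive R"
    and "finite B" and "0 \<in> B"
    and "ifs_invariant R B \<mu>"
    and "is_spectrum \<mu> \<Lambda>"
    and "\<forall>i\<in>{1..p}. \<Lambda>s i \<subseteq> Per (deltaB_hat B)"
    and "\<Lambda> = (\<Union>i\<in>{1..p}. (\<lambda>l. a i + transpose R *v l) ` \<Lambda>s i)"
    and "\<forall>i\<in>{1..p}. \<forall>j\<in>{1..p}. i \<noteq> j \<longrightarrow>
           ((\<lambda>l. a i + transpose R *v l) ` \<Lambda>s i) \<inter> ((\<lambda>l. a j + transpose R *v l) ` \<Lambda>s j) = {}"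
    and "\<forall>i\<in>{1..p}. is_spectrum \<mu> (\<Lambda>s i)"
  shows "p = card B \<and> is_spectrum (deltaB B) ((\<lambda>i. matrix_inv (transpose R) *v a i) ` {1..p})"
proof -
  interpret ifs R B \<mu>
    using expansive_imp_invertible assms(1-4) by unfold_locales auto
  define c where "c i = matrix_inv (transpose R) *v a i" for i
  have orth: "deltaB_hat B (c i - c j) = 0" if "i \<in> {1..p}" "j \<in> {1..p}" "i \<noteq> j" for i j
    unfolding c_def using that assms(5-9)
    by (intro deltaB_hat_eq_0_of_disjoint_translates[where \<Lambda> = \<Lambda> and \<Lambda>i = "\<Lambda>s i" and \<Lambda>j = "\<Lambda>s j"])
       auto
  have compl: "\<forall>b\<in>B. g b = 0" if "\<forall>i\<in>{1..p}. (\<Sum>y\<in>B. g y * cnj (expo (c i) y)) = 0" for g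
    using eq_0_of_orthogonal_to_translates[OF assms(5), where I = "{1..p}" and a = a and \<Lambda>s = \<Lambda>s and g = g] that assms(6,7)
    by (auto simp: c_def)
  have "card {1..p} = card B"
    by (rule card_orthogonal_complete_expo[OF finite_B B_nonempty _ orth compl]) simp_all
  moreover have "is_spectrum (deltaB B) (c ` {1..p})"
    by (rule deltaB_spectrum_of_orthogonal_complete[OF finite_B B_nonempty orth compl])
  ultimately show ?thesis by (simp add: c_def)
qed

end
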